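(* Let $f_0$ be a probability density on $\mathbb{R}$ with $f_0(-z)=f_0(z)$ for all $z\in\mathbb{R}$ and $f_0$ strictly decreasing on $[0,\infty)$. Let $X$ have density $\frac{1}{\sigma}f_0\big(\frac{x-\mu}{\sigma}\big)$ with $\mu\in\mathbb{R}$, $\sigma>0$ unknown. Given $0<\alpha<1$, let $c>0$ satisfy $\int_0^c f_0(z)\,dz = \alpha/2$ (such $c$ exists). Then $$\inf_{\mu\in\mathbb{R},\,\sigma>0} P_{\mu,\sigma}\Big(\sigma \le \frac{|X|}{c}\Big) = 1-\alpha.$$ *)

theory Defs
  imports "HOL-Probability.Probability"
begin

definition prob_density :: "(real \<Rightarrow> real) \<Rightarrow> bool" where
  "prob_density f \<longleftrightarrow> f \<in> borel_measurable lborel \<and> (\<forall>x. 0 \<le> f x)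
     \<and> (\<integral>\<^sup>+ x. ennreal (f x) \<partial>lborel) = 1"

definition loc_scale :: "(real \<Rightarrow> real) \<Rightarrow> real \<Rightarrow> real \<Rightarrow> real measure" where
  "loc_scale f0 \<mu> \<sigma> = density lborel (\<lambda>x. ennreal (f0 ((x - \<mu>) / \<sigma>) / \<sigma>))"

end

theory Submission
  imports Defs
begin

text \<open>Rescaling by \<open>x = \<mu> + \<sigma> z\<close> turns the event \<open>\<sigma> \<le> \<bar>X\<bar> / c\<close> into \<open>\<bar>Z + \<mu>/\<sigma>\<bar> \<ge> c\<close>
  for a variable \<open>Z\<close> with density \<open>f\<^sub>0\<close>. Since \<open>f\<^sub>0\<close> is symmetric and decreases in \<open>\<bar>z\<bar>\<close>, among
  all intervals of length \<open>2c\<close> the centred one \<open>(-c, c)\<close> carries the most mass (the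
  one-dimensional Anderson inequality), and it carries exactly \<open>\<alpha>\<close>. Hence the coverage
  probability is at least \<open>1 - \<alpha>\<close>, with equality at \<open>\<mu> = 0\<close>.\<close>

lemma loc_scale_eq_distr:
  assumes [measurable]: "f \<in> borel_measurable borel" and \<sigma>: "0 < \<sigma>"
  shows "loc_scale f \<mu> \<sigma> = distr (density lborel f) lborel (\<lambda>z. \<mu> + \<sigma> * z)"
proof -
  let ?g = "\<lambda>x. ennreal (f ((x - \<mu>) / \<sigma>) / \<sigma>)"
  have "loc_scale f \<mu> \<sigma> = density (density (distr lborel borel (\<lambda>z. \<mu> + \<sigma> * z)) (\<lambda>_. ennreal \<sigma>)) ?g"
    unfolding loc_scale_def using lborel_real_affine[of \<sigma> \<mu>] \<sigma> by simp
  also have "\<dots> = distr (density lborel (\<lambda>z. ennreal \<sigma> * ?g (\<mu> + \<sigma> * z))) borel (\<lambda>z. \<mu> + \<sigma> * z)"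
    by (simp add: density_density_eq density_distr)
  also have "(\<lambda>z. ennreal \<sigma> * ?g (\<mu> + \<sigma> * z)) = (\<lambda>z. ennreal (f z))"
    using \<sigma> by (auto simp: ennreal_mult'[symmetric])
  finally show ?thesis by (simp cong: distr_cong)
qed

lemma measure_loc_scale_abs_ge:
  assumes [measurable]: "f \<in> borel_measurable borel" and "0 < \<sigma>" "0 < c"
  shows "measure (loc_scale f \<mu> \<sigma>) {x. \<sigma> \<le> \<bar>x\<bar> / c} = measure (density lborel f) {z. c \<le> \<bar>z + \<mu> / \<sigma>\<bar>}"
proof -
  have "\<bar>\<mu> + \<sigma> * z\<bar> = \<sigma> * \<bar>z + \<mu> / \<sigma>\<bar>" for z
  proof -
    have "\<mu> + \<sigma> * z = \<sigma> * (z + \<mu> / \<sigma>)"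
      using \<open>0 < \<sigma>\<close> by (simp add: field_simps)
    then show ?thesis
      using \<open>0 < \<sigma>\<close> by (simp add: abs_mult)
  qed
  then have "(\<lambda>z. \<mu> + \<sigma> * z) -` {x. \<sigma> \<le> \<bar>x\<bar> / c} = {z. c \<le> \<bar>z + \<mu> / \<sigma>\<bar>}"
    using assms(2,3) by (auto simp: le_divide_eq mult.commute)
  then show ?thesis
    using assms by (simp add: loc_scale_eq_distr measure_distr)
qed

lemma measure_density_lborel_eq_set_integral:
  assumes [measurable]: "f \<in> borel_measurable borel" "A \<in> sets borel"
    and "\<And>x. 0 \<le> f x"
  shows "measure (density lborel f) A = (\<integral>x\<in>A. f x \<partial>lborel)"
proof -
  have "measure (density lborel f) A = integral\<^sup>L (density lborel f) (indicator A)"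
    by simp
  also have "\<dots> = (\<integral>x. f x *\<^sub>R indicator A x \<partial>lborel)"
    using assms by (intro integral_density) auto
  finally show ?thesis
    by (simp add: set_lebesgue_integral_def mult.commute)
qed

locale symmetric_unimodal_density =
  fixes f :: "real \<Rightarrow> real"
  assumes borel_measurable_density [measurable]: "f \<in> borel_measurable borel"
    and finite_mass: "(\<integral>\<^sup>+x. ennreal (f x) \<partial>lborel) \<noteq> \<infinity>"
    and symmetric: "\<And>x. f (- x) = f x"
    and antitone: "\<And>x y. 0 \<le> x \<Longrightarrow> x \<le> y \<Longrightarrow> f y \<le> f x"
begin

abbreviation M :: "real measure" where
  "M \<equiv> density lborel (\<lambda>x. ennreal (f x))"

sublocale finite_measure M
  using finite_mass by (intro finite_measureI) (simp add: emeasure_density)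

lemma density_le_if_abs_le: "\<bar>x\<bar> \<le> \<bar>y\<bar> \<Longrightarrow> f y \<le> f x"
proof -
  have abs: "f \<bar>u\<bar> = f u" for u
    by (cases "0 \<le> u") (auto simp: symmetric)
  assume "\<bar>x\<bar> \<le> \<bar>y\<bar>"
  then show ?thesis
    using antitone[of "\<bar>x\<bar>" "\<bar>y\<bar>"] by (simp add: abs)
qed

lemma emeasure_reflect_preimage:
  assumes [measurable]: "A \<in> sets borel"
  shows "emeasure M {z. a - z \<in> A} = (\<integral>\<^sup>+w. ennreal (f (a - w)) * indicator A w \<partial>lborel)"
proof -
  have "emeasure M {z. a - z \<in> A} = (\<integral>\<^sup>+z. ennreal (f z) * indicator A (a - z) \<partial>lborel)"
    by (simp add: emeasure_density indicator_def)
  also have "\<dots> = (\<integral>\<^sup>+w. ennreal (f (a - w)) * indicator A w \<partial>lborel)"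
    using nn_integral_real_affine[of "\<lambda>z. ennreal (f z) * indicator A (a - z)" "-1" a] by simp
  finally show ?thesis .
qed

lemma measure_reflect:
  assumes [measurable]: "A \<in> sets borel"
  shows "measure M {z. - z \<in> A} = measure M A"
  using emeasure_reflect_preimage[of A 0] by (simp add: symmetric emeasure_density measure_def)

lemma measure_reflect_le:
  assumes [measurable]: "A \<in> sets borel" and "0 \<le> c" "A \<subseteq> {..c}"
  shows "measure M {z. 2 * c - z \<in> A} \<le> measure M A"
proof -
  have "emeasure M {z. 2 * c - z \<in> A} \<le> (\<integral>\<^sup>+w. ennreal (f w) * indicator A w \<partial>lborel)"
    unfolding emeasure_reflect_preimage[OF assms(1)]
  proof (rule nn_integral_mono)
    fix w
    have "f (2 * c - w) \<le> f w" if "w \<in> A"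
      using that assms(2,3) by (intro density_le_if_abs_le) auto
    then show "ennreal (f (2 * c - w)) * indicator A w \<le> ennreal (f w) * indicator A w"
      by (simp add: indicator_def ennreal_leI)
  qed
  also have "\<dots> = emeasure M A"
    by (simp add: emeasure_density)
  finally show ?thesis
    by (simp add: emeasure_eq_measure)
qed

lemma measure_eq_if_AE_lborel:
  assumes "AE z in lborel. z \<in> A \<longleftrightarrow> z \<in> B" "A \<in> sets borel" "B \<in> sets borel"
  shows "measure M A = measure M B"
  using assms by (intro measure_eq_AE) (auto simp: AE_density)

text \<open>The two intervals differ by \<open>(-c-t, -c]\<close> versus \<open>[c-t, c)\<close>; reflecting the former
  through \<open>0\<close> and then through \<open>c\<close> moves it onto the latter, pointwise closer to the origin.\<close>

lemma measure_shifted_interval_le_nonneg: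
  assumes "0 \<le> t" "0 < c"
  shows "measure M {-c-t<..<c-t} \<le> measure M {-c<..<c}"
proof -
  have "measure M {-c-t<..<c-t} + measure M {c-t..<c} = measure M {-c-t<..<c}"
    using assms by (subst finite_measure_Union[symmetric]) (auto intro: arg_cong[where f = "measure M"])
  also have "\<dots> = measure M {-c-t<..-c} + measure M {-c<..<c}"
    using assms by (subst finite_measure_Union[symmetric]) (auto intro: arg_cong[where f = "measure M"])
  finally have split: "measure M {-c-t<..<c-t} + measure M {c-t..<c}
      = measure M {-c-t<..-c} + measure M {-c<..<c}" .
  have "measure M {-c-t<..-c} = measure M {z. - z \<in> {-c-t<..-c}}"
    by (rule measure_reflect[symmetric]) simp
  also have "{z. - z \<in> {-c-t<..-c}} = {z. 2 * c - z \<in> {c-t<..c}}"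
    by auto
  also have "measure M \<dots> \<le> measure M {c-t<..c}"
    using assms by (intro measure_reflect_le) auto
  also have "\<dots> = measure M {c-t..<c}"
    by (rule measure_eq_if_AE_lborel)
       (use AE_lborel_singleton[of "c-t"] AE_lborel_singleton[of c] in \<open>eventually_elim, auto\<close>)
  finally show ?thesis
    using split by linarith
qed

lemma measure_shifted_interval_le: "measure M {z. \<bar>z + t\<bar> < c} \<le> measure M {z. \<bar>z\<bar> < c}"
proof -
  have interval: "{z. \<bar>z + s\<bar> < c} = {-c-s<..<c-s}" for s
    by auto
  consider "c \<le> 0" | "0 < c" "0 \<le> t" | "0 < c" "t < 0"
    by linarith
  then show ?thesis
  proof cases
    case 1
    then have "{z. \<bar>z + t\<bar> < c} = {}"
      by auto
    then show ?thesis by simp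
  next
    case 2
    then show ?thesis
      using measure_shifted_interval_le_nonneg[of t c] interval[of t] interval[of 0] by simp
  next
    case 3
    have "measure M {z. \<bar>z + t\<bar> < c} = measure M {z. \<bar>z + - t\<bar> < c}"
      using measure_reflect[of "{z. \<bar>z + t\<bar> < c}"] by (simp add: abs_minus_commute)
    then show ?thesis
      using 3 measure_shifted_interval_le_nonneg[of "-t" c] interval[of "-t"] interval[of 0] by simp
  qed
qed

lemma measure_centered_interval:
  assumes "0 \<le> c"
  shows "measure M {z. \<bar>z\<bar> < c} = 2 * measure M {0..c}"
proof -
  have split: "{z. \<bar>z\<bar> < c} = {z. - z \<in> {0<..<c}} \<union> {0..<c}"
    by auto
  have "measure M {z. \<bar>z\<bar> < c} = measure M {z. - z \<in> {0<..<c}} + measure M {0..<c}"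
    unfolding split by (rule finite_measure_Union) auto
  also have "measure M {z. - z \<in> {0<..<c}} = measure M {0<..<c}"
    by (rule measure_reflect) simp
  also have "measure M {0<..<c} = measure M {0..c}"
    by (rule measure_eq_if_AE_lborel)
       (use AE_lborel_singleton[of 0] AE_lborel_singleton[of c] in \<open>eventually_elim, auto\<close>)
  also have "measure M {0..<c} = measure M {0..c}"
    by (rule measure_eq_if_AE_lborel)
       (use AE_lborel_singleton[of c] in \<open>eventually_elim, auto\<close>)
  finally show ?thesis by simp
qed

end

theorem theorem3p1:
  fixes f0 :: "real \<Rightarrow> real" and \<alpha> c :: real
  assumes dens: "prob_density f0"
    and sym: "\<And>z. f0 (- z) = f0 z"
    and decr: "\<And>x y. 0 \<le> x \<Longrightarrow> x < y \<Longrightarrow> f0 y < f0 x"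
    and \<alpha>: "0 < \<alpha>" "\<alpha> < 1"
    and c: "0 < c" "(\<integral>z\<in>{0..c}. f0 z \<partial>lborel) = \<alpha> / 2"
  shows "(INF p \<in> UNIV \<times> {0<..}.
            measure (loc_scale f0 (fst p) (snd p)) {x. snd p \<le> \<bar>x\<bar> / c}) = 1 - \<alpha>"
proof -
  have [measurable]: "f0 \<in> borel_measurable borel" and nonneg: "\<And>x. 0 \<le> f0 x"
    and mass: "(\<integral>\<^sup>+x. ennreal (f0 x) \<partial>lborel) = 1"
    using dens by (auto simp: prob_density_def)
  interpret symmetric_unimodal_density f0
    using mass sym decr by unfold_locales (auto simp: order_le_less)
  interpret prob_space M
    using mass by (intro prob_spaceI) (simp add: emeasure_density)
  have "measure M {0..c} = \<alpha> / 2"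
    using c(2) nonneg by (simp add: measure_density_lborel_eq_set_integral)
  then have central: "measure M {z. \<bar>z\<bar> < c} = \<alpha>"
    using c(1) by (simp add: measure_centered_interval)
  have coverage: "measure (loc_scale f0 \<mu> \<sigma>) {x. \<sigma> \<le> \<bar>x\<bar> / c} = 1 - measure M {z. \<bar>z + \<mu> / \<sigma>\<bar> < c}"
    if "0 < \<sigma>" for \<mu> \<sigma>
    using prob_compl[of "{z. \<bar>z + \<mu> / \<sigma>\<bar> < c}"] that c(1)
    by (simp add: measure_loc_scale_abs_ge set_diff_eq not_less)
  let ?h = "\<lambda>p. measure (loc_scale f0 (fst p) (snd p)) {x. snd p \<le> \<bar>x\<bar> / c}"
  show ?thesis
  proof (rule cInf_eq_minimum)
    show "1 - \<alpha> \<in> ?h ` (UNIV \<times> {0<..})"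
      using coverage[of 1 0] central by (intro image_eqI[of _ _ "(0, 1)"]) auto
  next
    fix y
    assume "y \<in> ?h ` (UNIV \<times> {0<..})"
    then show "1 - \<alpha> \<le> y"
      using coverage measure_shifted_interval_le central by auto
  qed
qed

end
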